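(* Consider the two-source game ($m=2$) with $n_1\ge n_2\ge 0$ and $q\in[0,1)$. Let $\mathbf p$ be an arbitrary pure strategy profile and let $u_1,u_2$ be the numbers of users of $N_1$ and $N_2$, respectively, that choose DP under $\mathbf p$. Define $$t_1(x)=\frac{q\mu/\phi+x(1+\bar q^2)+(n_1+1)\bar q-n_2\bar q^2}{2\bar q},\qquad t_2(x)=\frac{q\mu/\phi+x(1+\bar q^2)+(n_2+1)\bar q-n_1\bar q^2}{2\bar q}.$$ Then: [1] if (a) $u_1=n_1$ and $u_2<n_2$, or (b) $u_1=0$ and $u_2>0$, then $\mathbf p$ is not a Nash equilibrium; [2] if $u_1\in[0,n_1)$ and $u_2\in[0,n_2)$, then $\mathbf p$ is a Nash equilibrium if and only if $u_1\ge t_1(u_2)-1$ and $u_2\ge t_2(u_1)-1$; [3] if $u_1\in(0,n_1)$ and $u_2=n_2$, then $\mathbf p$ is a Nash equilibrium if and only if $u_1\in[t_1(u_2)-1,\,t_1(u_2)]$; [4] if $u_1=n_1$ and $u_2=n_2$, then $\mathbf p$ is a Nash equilibrium if and only if $n_1\bar q\le q\mu/\phi+n_2+\bar q$.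
   Context: Two-source network: sources $s_1,s_2$ and destination $d$; source $s_i$ has a set $N_i$ of $n_i$ users. Each user generates an independent Poisson flow of packets of rate $\phi>0$; each direct link $(s_i,d)$ has service rate $\mu>0$; the sidelink between $s_1$ and $s_2$ loses packets independently with probability $q$, and $\bar q=1-q$. Only pure strategies are considered: a user of $N_1$ chooses DP $(s_1,d)$ or IP $(s_1,s_2,d)$; a user of $N_2$ chooses DP $(s_2,d)$ or IP $(s_2,s_1,d)$. With $u_i$ users of $N_i$ on DP, the traffic rates are $T_1=u_1\phi+(n_2-u_2)\bar q\phi$ and $T_2=u_2\phi+(n_1-u_1)\bar q\phi$. The loss rate of a user of $N_i$ is $\phi\frac{T_i}{T_i+\mu}$ on DP and $\phi\left(q+\bar q\frac{T_j}{T_j+\mu}\right)$ on IP to $s_j$, $j\ne i$ (traffic rates include the user's own traffic). A Nash equilibrium is a pure profile in which no user can strictly decrease its loss rate by unilaterally switching its route. *)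

theory Defs
  imports Complex_Main
begin

text \<open>Users of N_i are indexed by {0..<n_i}; a pure strategy of a
user is a bool: True = direct path (DP), False = indirect path (IP) via the other source.
A pure profile is a pair of functions (s1, s2); only their values on {0..<n_i} matter.\<close>

definition qbar :: "real \<Rightarrow> real" where
  "qbar q = 1 - q"

definition dp_count :: "(nat \<Rightarrow> bool) \<Rightarrow> nat \<Rightarrow> nat" where
  "dp_count s n = card {k. k < n \<and> s k}"

definition traffic :: "real \<Rightarrow> real \<Rightarrow> nat \<Rightarrow> nat \<Rightarrow> (nat \<Rightarrow> bool) \<Rightarrow> (nat \<Rightarrow> bool) \<Rightarrow> real" where
  "traffic phi q ni nj si sj =
     real (dp_count si ni) * phi + real (nj - dp_count sj nj) * qbar q * phi"

definition loss :: "real \<Rightarrow> real \<Rightarrow> real \<Rightarrow> nat \<Rightarrow> nat \<Rightarrow> (nat \<Rightarrow> bool) \<Rightarrow> (nat \<Rightarrow> bool) \<Rightarrow> nat \<Rightarrow> real" where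
  "loss phi mu q ni nj si sj k =
     (if si k then phi * (traffic phi q ni nj si sj / (traffic phi q ni nj si sj + mu))
      else phi * (q + qbar q * (traffic phi q nj ni sj si / (traffic phi q nj ni sj si + mu))))"

definition is_NE :: "real \<Rightarrow> real \<Rightarrow> real \<Rightarrow> nat \<Rightarrow> nat \<Rightarrow> (nat \<Rightarrow> bool) \<Rightarrow> (nat \<Rightarrow> bool) \<Rightarrow> bool" where
  "is_NE phi mu q n1 n2 s1 s2 \<longleftrightarrow>
     (\<forall>k<n1. \<forall>b. \<not> loss phi mu q n1 n2 (s1(k := b)) s2 k < loss phi mu q n1 n2 s1 s2 k) \<and>
     (\<forall>k<n2. \<forall>b. \<not> loss phi mu q n2 n1 (s2(k := b)) s1 k < loss phi mu q n2 n1 s2 s1 k)"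

definition t1 :: "real \<Rightarrow> real \<Rightarrow> real \<Rightarrow> nat \<Rightarrow> nat \<Rightarrow> real \<Rightarrow> real" where
  "t1 phi mu q n1 n2 x =
     (q * mu / phi + x * (1 + (qbar q)^2) + (real n1 + 1) * qbar q - real n2 * (qbar q)^2) / (2 * qbar q)"

definition t2 :: "real \<Rightarrow> real \<Rightarrow> real \<Rightarrow> nat \<Rightarrow> nat \<Rightarrow> real \<Rightarrow> real" where
  "t2 phi mu q n1 n2 x =
     (q * mu / phi + x * (1 + (qbar q)^2) + (real n2 + 1) * qbar q - real n1 * (qbar q)^2) / (2 * qbar q)"

end

theory Submission
  imports Defs
begin

(* Since T/(T+mu) is increasing, a user compares the two routes through a linear condition on
   the traffic rates, and a switch changes them by phi (own source) or by qbar phi (other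
   source). Hence the DP users of N_i are content iff u_i <= t_i(u_j), and its IP users iff
   u_i >= t_i(u_j) - 1. The four cases follow from this threshold description, because content
   IP users of one source force content DP users of the other, and because the boundary
   profiles u_1 = n_1 resp. u_1 = 0 violate a threshold as soon as n_2 <= n_1. *)

lemma dp_count_le: "dp_count s n \<le> n"
  unfolding dp_count_def using card_mono[of "{..<n}" "{k. k < n \<and> s k}"] by auto

lemma dp_count_pos_iff: "0 < dp_count s n \<longleftrightarrow> (\<exists>k<n. s k)"
  unfolding dp_count_def by (auto simp: card_gt_0_iff)

lemma dp_count_less_iff: "dp_count s n < n \<longleftrightarrow> (\<exists>k<n. \<not> s k)"
proof -
  have sub: "{k. k < n \<and> s k} \<subseteq> {..<n}" by blast
  have "dp_count s n = n \<longleftrightarrow> {k. k < n \<and> s k} = {..<n}"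
  proof
    assume "dp_count s n = n"
    then show "{k. k < n \<and> s k} = {..<n}"
      using card_subset_eq[OF finite_lessThan sub] by (simp add: dp_count_def)
  qed (simp add: dp_count_def)
  also have "\<dots> \<longleftrightarrow> (\<forall>k<n. s k)" by blast
  finally show ?thesis using dp_count_le[of s n] by (auto simp: order.order_iff_strict)
qed

lemma dp_count_upd_True:
  assumes "k < n" "\<not> s k"
  shows "dp_count (s(k := True)) n = dp_count s n + 1"
proof -
  have "{j. j < n \<and> (s(k := True)) j} = insert k {j. j < n \<and> s j}" using assms by auto
  then show ?thesis unfolding dp_count_def using assms by simp
qed

lemma dp_count_upd_False:
  assumes "k < n" "s k"
  shows "dp_count (s(k := False)) n + 1 = dp_count s n"
proof -
  have "{j. j < n \<and> s j} = insert k {j. j < n \<and> (s(k := False)) j}" using assms by auto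
  then show ?thesis unfolding dp_count_def by simp
qed

lemma traffic_eq:
  "traffic phi q ni nj si sj =
     phi * (real (dp_count si ni) + (real nj - real (dp_count sj nj)) * qbar q)"
  using dp_count_le[of sj nj] by (simp add: traffic_def algebra_simps)

lemma traffic_nonneg: "0 \<le> phi \<Longrightarrow> q \<le> 1 \<Longrightarrow> 0 \<le> traffic phi q ni nj si sj"
  unfolding traffic_def qbar_def by simp

lemma dp_loss_minus_ip_loss:
  fixes A B mu phi q :: real
  assumes "0 \<le> A" "0 \<le> B" "0 < mu"
  shows "phi * (A / (A + mu)) - phi * (q + qbar q * (B / (B + mu)))
       = phi * mu / ((A + mu) * (B + mu)) * (qbar q * A - (B + q * mu))"
proof -
  have "A + mu \<noteq> 0" "B + mu \<noteq> 0" using assms by auto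
  then show ?thesis by (simp add: qbar_def divide_simps) (simp add: algebra_simps)
qed

lemma dp_loss_less_ip_loss_iff:
  fixes A B mu phi q :: real
  assumes "0 \<le> A" "0 \<le> B" "0 < mu" "0 < phi"
  shows "phi * (A / (A + mu)) < phi * (q + qbar q * (B / (B + mu))) \<longleftrightarrow> qbar q * A < B + q * mu"
proof -
  define c where "c = phi * mu / ((A + mu) * (B + mu))"
  have "0 < c" using assms by (simp add: c_def)
  then have "c * (qbar q * A - (B + q * mu)) < 0 \<longleftrightarrow> qbar q * A < B + q * mu"
    by (simp add: mult_less_0_iff)
  then show ?thesis
    by (subst less_iff_diff_less_0) (simp only: dp_loss_minus_ip_loss[OF assms(1-3)] c_def)
qed

lemma ip_loss_less_dp_loss_iff:
  fixes A B mu phi q :: real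
  assumes "0 \<le> A" "0 \<le> B" "0 < mu" "0 < phi"
  shows "phi * (q + qbar q * (B / (B + mu))) < phi * (A / (A + mu)) \<longleftrightarrow> B + q * mu < qbar q * A"
proof -
  define c where "c = phi * mu / ((A + mu) * (B + mu))"
  have "0 < c" using assms by (simp add: c_def)
  then have "0 < c * (qbar q * A - (B + q * mu)) \<longleftrightarrow> B + q * mu < qbar q * A"
    by (simp add: zero_less_mult_iff)
  then show ?thesis
    by (subst diff_gt_0_iff_gt[symmetric]) (simp only: dp_loss_minus_ip_loss[OF assms(1-3)] c_def)
qed

lemma t2_eq_t1_swap: "t2 phi mu q n1 n2 = t1 phi mu q n2 n1"
  by (simp add: fun_eq_iff t1_def t2_def)

(* The right-hand side is qbar T_i <= T_j + q mu for the traffic rates after a DP user of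
   N_i has moved to the IP, in the shape produced by traffic_eq. *)
lemma le_t1_iff:
  assumes "0 < phi" "q < 1"
  shows "x \<le> t1 phi mu q ni nj y \<longleftrightarrow>
     qbar q * (phi * (x + (real nj - y) * qbar q)) \<le> phi * (y + (real ni - (x - 1)) * qbar q) + q * mu"
proof -
  define Q where "Q = qbar q"
  define N where "N = y * (1 + Q\<^sup>2) + (real ni + 1) * Q - real nj * Q\<^sup>2"
  have "0 < Q" using assms by (simp add: Q_def qbar_def)
  moreover have "t1 phi mu q ni nj y = (q * mu / phi + N) / (2 * Q)"
    by (simp add: t1_def N_def Q_def add_diff_eq add.assoc)
  ultimately have "x \<le> t1 phi mu q ni nj y \<longleftrightarrow> phi * (x * (2 * Q)) \<le> phi * (q * mu / phi + N)"
    using assms by (simp add: le_divide_eq)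
  also have "phi * (q * mu / phi + N) = q * mu + phi * N"
    using assms by (simp add: distrib_left)
  finally have "x \<le> t1 phi mu q ni nj y \<longleftrightarrow> phi * (x * (2 * Q)) \<le> q * mu + phi * N" .
  moreover have "(phi * (y + (real ni - (x - 1)) * Q) + q * mu) - Q * (phi * (x + (real nj - y) * Q))
      = q * mu + phi * N - phi * (x * (2 * Q))"
    by (simp add: N_def algebra_simps power2_eq_square)
  ultimately show ?thesis unfolding Q_def by linarith
qed

lemma t1_minus_one_le_iff:
  assumes "0 < phi" "q < 1"
  shows "t1 phi mu q ni nj y - 1 \<le> x \<longleftrightarrow>
     phi * (y + (real ni - x) * qbar q) + q * mu \<le> qbar q * (phi * (x + 1 + (real nj - y) * qbar q))"
proof -
  define Q where "Q = qbar q"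
  define N where "N = y * (1 + Q\<^sup>2) + (real ni + 1) * Q - real nj * Q\<^sup>2"
  have "0 < Q" using assms by (simp add: Q_def qbar_def)
  moreover have "t1 phi mu q ni nj y = (q * mu / phi + N) / (2 * Q)"
    by (simp add: t1_def N_def Q_def add_diff_eq add.assoc)
  ultimately have "t1 phi mu q ni nj y - 1 \<le> x \<longleftrightarrow> phi * (q * mu / phi + N) \<le> phi * ((x + 1) * (2 * Q))"
    using assms by (simp add: diff_le_eq divide_le_eq)
  also have "phi * (q * mu / phi + N) = q * mu + phi * N"
    using assms by (simp add: distrib_left)
  finally have "t1 phi mu q ni nj y - 1 \<le> x \<longleftrightarrow> q * mu + phi * N \<le> phi * ((x + 1) * (2 * Q))" .
  moreover have "Q * (phi * (x + 1 + (real nj - y) * Q)) - (phi * (y + (real ni - x) * Q) + q * mu)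
      = phi * ((x + 1) * (2 * Q)) - (q * mu + phi * N)"
    by (simp add: N_def algebra_simps power2_eq_square)
  ultimately show ?thesis unfolding Q_def by linarith
qed

definition no_profitable_switch ::
    "real \<Rightarrow> real \<Rightarrow> real \<Rightarrow> nat \<Rightarrow> nat \<Rightarrow> (nat \<Rightarrow> bool) \<Rightarrow> (nat \<Rightarrow> bool) \<Rightarrow> nat \<Rightarrow> bool" where
  "no_profitable_switch phi mu q ni nj si sj k \<longleftrightarrow>
     (\<forall>b. \<not> loss phi mu q ni nj (si(k := b)) sj k < loss phi mu q ni nj si sj k)"

lemma is_NE_iff_no_profitable_switch:
  "is_NE phi mu q n1 n2 s1 s2 \<longleftrightarrow>
     (\<forall>k<n1. no_profitable_switch phi mu q n1 n2 s1 s2 k) \<and>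
     (\<forall>k<n2. no_profitable_switch phi mu q n2 n1 s2 s1 k)"
  unfolding is_NE_def no_profitable_switch_def ..

lemma no_profitable_switch_iff:
  "no_profitable_switch phi mu q ni nj si sj k \<longleftrightarrow>
     \<not> loss phi mu q ni nj (si(k := \<not> si k)) sj k < loss phi mu q ni nj si sj k"
  unfolding no_profitable_switch_def
proof (intro iffI allI)
  fix b
  assume switch: "\<not> loss phi mu q ni nj (si(k := \<not> si k)) sj k < loss phi mu q ni nj si sj k"
  show "\<not> loss phi mu q ni nj (si(k := b)) sj k < loss phi mu q ni nj si sj k"
  proof (cases "b = si k")
    case True
    then show ?thesis by simp
  next
    case False
    then have "b = (\<not> si k)" by blast
    then show ?thesis using switch by simp
  qed
qed simp

lemma no_profitable_switch_iff_threshold: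
  assumes "0 < phi" "0 < mu" "q < 1" "k < ni"
  shows "no_profitable_switch phi mu q ni nj si sj k \<longleftrightarrow>
    (if si k then real (dp_count si ni) \<le> t1 phi mu q ni nj (real (dp_count sj nj))
     else t1 phi mu q ni nj (real (dp_count sj nj)) - 1 \<le> real (dp_count si ni))"
proof (cases "si k")
  case True
  define Ti where "Ti = traffic phi q ni nj si sj"
  define Tj where "Tj = traffic phi q nj ni sj (si(k := False))"
  have T: "0 \<le> Ti" "0 \<le> Tj" unfolding Ti_def Tj_def using assms by (simp_all add: traffic_nonneg)
  have "real (dp_count (si(k := False)) ni) = real (dp_count si ni) - 1"
    using arg_cong[OF dp_count_upd_False[of k ni si], of real] assms(4) True by simp
  then have count: "Tj = phi * (real (dp_count sj nj) + (real ni - (real (dp_count si ni) - 1)) * qbar q)"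
    unfolding Tj_def by (simp add: traffic_eq)
  have "no_profitable_switch phi mu q ni nj si sj k \<longleftrightarrow>
      \<not> phi * (q + qbar q * (Tj / (Tj + mu))) < phi * (Ti / (Ti + mu))"
    unfolding no_profitable_switch_iff using True by (simp add: loss_def Ti_def Tj_def)
  also have "\<dots> \<longleftrightarrow> qbar q * Ti \<le> Tj + q * mu"
    using ip_loss_less_dp_loss_iff[OF T(1,2) assms(2,1)] by (simp only: not_less)
  also have "\<dots> \<longleftrightarrow> real (dp_count si ni) \<le> t1 phi mu q ni nj (real (dp_count sj nj))"
    unfolding count Ti_def traffic_eq using assms by (simp only: le_t1_iff)
  finally show ?thesis using True by simp
next
  case False
  define Ti where "Ti = traffic phi q ni nj (si(k := True)) sj"
  define Tj where "Tj = traffic phi q nj ni sj si"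
  have T: "0 \<le> Ti" "0 \<le> Tj" unfolding Ti_def Tj_def using assms by (simp_all add: traffic_nonneg)
  have count: "Ti = phi * (real (dp_count si ni) + 1 + (real nj - real (dp_count sj nj)) * qbar q)"
    unfolding Ti_def using assms(4) False by (simp add: traffic_eq dp_count_upd_True)
  have "no_profitable_switch phi mu q ni nj si sj k \<longleftrightarrow>
      \<not> phi * (Ti / (Ti + mu)) < phi * (q + qbar q * (Tj / (Tj + mu)))"
    unfolding no_profitable_switch_iff using False by (simp add: loss_def Ti_def Tj_def)
  also have "\<dots> \<longleftrightarrow> Tj + q * mu \<le> qbar q * Ti"
    using dp_loss_less_ip_loss_iff[OF T(1,2) assms(2,1)] by (simp only: not_less)
  also have "\<dots> \<longleftrightarrow> t1 phi mu q ni nj (real (dp_count sj nj)) - 1 \<le> real (dp_count si ni)"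
    unfolding count Tj_def traffic_eq using assms by (simp only: t1_minus_one_le_iff)
  finally show ?thesis using False by simp
qed

lemma is_NE_iff_thresholds:
  fixes s1 s2 :: "nat \<Rightarrow> bool" and n1 n2 :: nat
  assumes "0 < phi" "0 < mu" "q < 1"
  defines "u1 \<equiv> dp_count s1 n1" and "u2 \<equiv> dp_count s2 n2"
  shows "is_NE phi mu q n1 n2 s1 s2 \<longleftrightarrow>
    (0 < u1 \<longrightarrow> real u1 \<le> t1 phi mu q n1 n2 (real u2)) \<and>
    (u1 < n1 \<longrightarrow> t1 phi mu q n1 n2 (real u2) - 1 \<le> real u1) \<and>
    (0 < u2 \<longrightarrow> real u2 \<le> t2 phi mu q n1 n2 (real u1)) \<and>
    (u2 < n2 \<longrightarrow> t2 phi mu q n1 n2 (real u1) - 1 \<le> real u2)"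
  unfolding is_NE_iff_no_profitable_switch t2_eq_t1_swap u1_def u2_def dp_count_pos_iff dp_count_less_iff
  using no_profitable_switch_iff_threshold[OF assms(1-3)] by auto

(* If the IP users of N_1 do not want to switch, neither do the DP users of N_2: the slack of
   the latter, times 1 + qbar^2, exceeds 2 qbar times the slack of the former. *)
lemma t1_minus_one_le_imp_le_t2:
  assumes "0 < phi" "0 < mu" "0 \<le> q" "q < 1" "0 \<le> x"
    and "t1 phi mu q n1 n2 y - 1 \<le> x"
  shows "y \<le> t2 phi mu q n1 n2 x"
proof -
  define Q where "Q = qbar q"
  define c where "c = q * mu / phi"
  define N1 where "N1 = c + y * (1 + Q\<^sup>2) + (real n1 + 1) * Q - real n2 * Q\<^sup>2"
  define N2 where "N2 = c + x * (1 + Q\<^sup>2) + (real n2 + 1) * Q - real n1 * Q\<^sup>2"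
  have Q: "0 < Q" "Q \<le> 1" and c: "0 \<le> c" using assms by (simp_all add: Q_def qbar_def c_def)
  have "N1 / (2 * Q) \<le> x + 1"
    using assms(6) by (simp add: t1_def N1_def Q_def c_def diff_le_eq)
  then have "0 \<le> 2 * Q * (x + 1) - N1" using Q by (simp add: divide_le_eq mult.commute)
  have "(1 + Q\<^sup>2) * (N2 - 2 * Q * y) = 2 * Q * (2 * Q * (x + 1) - N1)
      + (x * (1 - Q\<^sup>2)\<^sup>2 + real n2 * Q * (1 - Q\<^sup>2) + Q * (1 - Q)\<^sup>2
         + real n1 * Q\<^sup>2 * (1 - Q\<^sup>2) + c * (1 + Q)\<^sup>2)"
    unfolding N1_def N2_def by (simp add: algebra_simps power2_eq_square)
  also have "0 \<le> \<dots>"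
    using Q c \<open>0 \<le> 2 * Q * (x + 1) - N1\<close> \<open>0 \<le> x\<close>
    by (intro add_nonneg_nonneg mult_nonneg_nonneg) (auto simp: power_le_one)
  finally have "2 * Q * y \<le> N2"
    using add_pos_nonneg[OF zero_less_one zero_le_power2[of Q]] by (simp add: zero_le_mult_iff)
  then show ?thesis using Q by (simp add: t2_def N2_def Q_def c_def le_divide_eq mult.commute)
qed

lemma t2_minus_one_le_imp_le_t1:
  assumes "0 < phi" "0 < mu" "0 \<le> q" "q < 1" "0 \<le> y"
    and "t2 phi mu q n1 n2 x - 1 \<le> y"
  shows "x \<le> t1 phi mu q n1 n2 y"
  using t1_minus_one_le_imp_le_t2[of phi mu q y n2 n1 x] assms by (simp add: t2_eq_t1_swap)

lemma less_t2_at_full: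
  assumes "0 < phi" "0 < mu" "0 \<le> q" "q < 1" "n2 \<le> n1"
  shows "real n2 < t2 phi mu q n1 n2 (real n1)"
proof -
  define Q where "Q = qbar q"
  define c where "c = q * mu / phi"
  define N where "N = c + real n1 * (1 + Q\<^sup>2) + (real n2 + 1) * Q - real n1 * Q\<^sup>2"
  have Q: "0 < Q" "Q \<le> 1" and c: "0 \<le> c" using assms by (simp_all add: Q_def qbar_def c_def)
  have "N = c + real n1 + real n2 * Q + Q" by (simp add: N_def algebra_simps)
  moreover have "Q * real n2 \<le> real n2" using Q by (simp add: mult_left_le_one_le)
  moreover have "real n2 \<le> real n1" using assms(5) by simp
  ultimately have "real n2 * (2 * Q) < N" using Q c by (simp add: algebra_simps)
  then show ?thesis using Q by (simp add: t2_def N_def Q_def c_def less_divide_eq)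
qed

lemma one_less_t1:
  assumes "0 < phi" "0 < mu" "0 \<le> q" "q < 1" "n2 \<le> n1" "1 \<le> y"
  shows "1 < t1 phi mu q n1 n2 y"
proof -
  define Q where "Q = qbar q"
  define c where "c = q * mu / phi"
  define N where "N = c + y * (1 + Q\<^sup>2) + (real n1 + 1) * Q - real n2 * Q\<^sup>2"
  have Q: "0 < Q" "Q \<le> 1" and c: "0 \<le> c" using assms by (simp_all add: Q_def qbar_def c_def)
  have "N = c + y * (1 + Q\<^sup>2) + (real n1 * Q + Q) - real n2 * Q\<^sup>2"
    by (simp only: N_def distrib_right mult_1_left)
  moreover have "real n2 * Q\<^sup>2 \<le> real n1 * Q"
    using Q assms(5) by (simp add: power2_eq_square mult_mono)
  moreover have "1 + Q\<^sup>2 \<le> y * (1 + Q\<^sup>2)"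
    using mult_right_mono[OF assms(6), of "1 + Q\<^sup>2"] by simp
  moreover have "0 < Q\<^sup>2" using Q by simp
  ultimately have "2 * Q < N" using Q c by linarith
  then show ?thesis using Q by (simp add: t1_def N_def Q_def c_def less_divide_eq)
qed

lemma le_t1_at_full_iff:
  assumes "q < 1"
  shows "real n1 \<le> t1 phi mu q n1 n2 (real n2) \<longleftrightarrow> real n1 * qbar q \<le> q * mu / phi + real n2 + qbar q"
proof -
  have "0 < qbar q" using assms by (simp add: qbar_def)
  then show ?thesis unfolding t1_def by (simp add: le_divide_eq algebra_simps power2_eq_square)
qed

theorem theorem4:
  fixes phi mu q :: real and n1 n2 :: nat and s1 s2 :: "nat \<Rightarrow> bool"
  assumes "phi > 0" and "mu > 0" and "0 \<le> q" and "q < 1" and "n2 \<le> n1"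
  defines "u1 \<equiv> dp_count s1 n1" and "u2 \<equiv> dp_count s2 n2"
  shows
    "(((u1 = n1 \<and> u2 < n2) \<or> (u1 = 0 \<and> u2 > 0)) \<longrightarrow> \<not> is_NE phi mu q n1 n2 s1 s2)
   \<and> ((u1 < n1 \<and> u2 < n2) \<longrightarrow>
        (is_NE phi mu q n1 n2 s1 s2 \<longleftrightarrow>
           real u1 \<ge> t1 phi mu q n1 n2 (real u2) - 1 \<and> real u2 \<ge> t2 phi mu q n1 n2 (real u1) - 1))
   \<and> ((0 < u1 \<and> u1 < n1 \<and> u2 = n2) \<longrightarrow>
        (is_NE phi mu q n1 n2 s1 s2 \<longleftrightarrow>
           t1 phi mu q n1 n2 (real u2) - 1 \<le> real u1 \<and> real u1 \<le> t1 phi mu q n1 n2 (real u2)))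
   \<and> ((u1 = n1 \<and> u2 = n2) \<longrightarrow>
        (is_NE phi mu q n1 n2 s1 s2 \<longleftrightarrow>
           real n1 * qbar q \<le> q * mu / phi + real n2 + qbar q))"
proof -
  note p = assms(1-4)
  have u_le: "u1 \<le> n1" "u2 \<le> n2" unfolding u1_def u2_def by (rule dp_count_le)+
  note NE = is_NE_iff_thresholds[OF assms(1,2,4), of n1 n2 s1 s2, folded u1_def u2_def]
  note ip1_dp2 = t1_minus_one_le_imp_le_t2[OF p of_nat_0_le_iff, of n1 n2 "real u2" u1]
  note ip2_dp1 = t2_minus_one_le_imp_le_t1[OF p of_nat_0_le_iff, of n1 n2 "real u1" u2]
  have full2: "real n2 < t2 phi mu q n1 n2 (real n1)" using less_t2_at_full[OF p assms(5)] .
  have ip1: "1 < t1 phi mu q n1 n2 (real u2)" if "0 < u2"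
    using one_less_t1[OF p assms(5)] that by simp
  show ?thesis
  proof (intro conjI impI)
    assume "(u1 = n1 \<and> u2 < n2) \<or> (u1 = 0 \<and> u2 > 0)"
    then show "\<not> is_NE phi mu q n1 n2 s1 s2"
    proof (elim disjE conjE)
      assume "u1 = n1" "u2 < n2"
      then have "real u2 < t2 phi mu q n1 n2 (real u1) - 1" using full2 by simp
      then show ?thesis using NE \<open>u2 < n2\<close> by auto
    next
      assume "u1 = 0" "0 < u2"
      then have "u1 < n1" "real u1 < t1 phi mu q n1 n2 (real u2) - 1" using u_le assms(5) ip1 by auto
      then show ?thesis using NE by auto
    qed
  next
    assume "u1 < n1 \<and> u2 < n2"
    then show "is_NE phi mu q n1 n2 s1 s2 \<longleftrightarrow>
        real u1 \<ge> t1 phi mu q n1 n2 (real u2) - 1 \<and> real u2 \<ge> t2 phi mu q n1 n2 (real u1) - 1"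
      using NE ip1_dp2 ip2_dp1 by auto
  next
    assume "0 < u1 \<and> u1 < n1 \<and> u2 = n2"
    then show "is_NE phi mu q n1 n2 s1 s2 \<longleftrightarrow>
        t1 phi mu q n1 n2 (real u2) - 1 \<le> real u1 \<and> real u1 \<le> t1 phi mu q n1 n2 (real u2)"
      using NE ip1_dp2 by auto
  next
    assume "u1 = n1 \<and> u2 = n2"
    moreover have "0 \<le> q * mu / phi + real n2 + qbar q" using p by (simp add: qbar_def)
    ultimately show "is_NE phi mu q n1 n2 s1 s2 \<longleftrightarrow> real n1 * qbar q \<le> q * mu / phi + real n2 + qbar q"
      using NE full2 le_t1_at_full_iff[OF assms(4), of n1 phi mu n2] by auto
  qed
qed

end
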